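(* Let $A\in \mathrm{GL}(m,\mathbb{Z})$, and suppose that there exist a sequence of integers $r_i\to\infty$ and matrices $B_i\in\mathrm{GL}(m,\mathbb{Z})$ satisfying $B_i^{r_i}=A$. Then there exists a nonzero integer $e$ such that $A^e=\mathrm{Id}$. *)

theory Defs
  imports "HOL-Analysis.Analysis"
begin

primrec mat_pow :: "'a::semiring_1^'n^'n \<Rightarrow> nat \<Rightarrow> 'a^'n^'n" where
  "mat_pow A 0 = mat 1"
| "mat_pow A (Suc k) = A ** mat_pow A k"

text \<open>Integer powers; negative exponents use the (two-sided) matrix inverse,
  meaningful for invertible matrices, i.e. elements of GL.\<close>
definition mat_zpow :: "'a::semiring_1^'n^'n \<Rightarrow> int \<Rightarrow> 'a^'n^'n" where
  "mat_zpow A e = (if 0 \<le> e then mat_pow A (nat e) else mat_pow (matrix_inv A) (nat (- e)))"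

end

(*
  If B^r = A, every eigenvalue of B is an r-th root of an eigenvalue of A. Hence the eigenvalues
  of the B_i are uniformly bounded, and their integer characteristic polynomials range over a
  finite set. Infinitely many exponents r_i therefore share one characteristic polynomial, and
  every root z of it has infinitely many powers z^(r_i) in the finite spectrum of A, which does
  not contain 0: z is a root of unity. So V_i = B_i^L is unipotent for one L > 0, and
  A^L = V_i^(r_i). Writing V_i = 1 + N with N^s nonzero and N^(s+1) = 0, one gets
  (A^L - 1)^s = r_i^s N^s; as N^s is a nonzero integer matrix, this bounds r_i unless A^L = 1.
*)

theory Submission
  imports Defs Jordan_Normal_Form.Spectral_Radius
begin

hide_const (open) Matrix.mat
no_notation Matrix.vec_index (infixl "$" 100)

section \<open>Polynomials evaluated at Cartesian matrices\<close>

lemma matrix_mul_mat_left_entry: "((mat a :: 'a::semiring_1^'n^'n) ** X) $ i $ j = a * X $ i $ j"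
  by (simp add: matrix_matrix_mult_def Finite_Cartesian_Product.mat_def if_distrib if_distribR
      cong: if_cong)

lemma matrix_mul_mat_right_entry: "(X ** (mat a :: 'a::semiring_1^'n^'n)) $ i $ j = X $ i $ j * a"
  by (simp add: matrix_matrix_mult_def Finite_Cartesian_Product.mat_def if_distrib if_distribR
      cong: if_cong)

lemma matrix_mul_mat_commute: "(mat a :: 'a::comm_semiring_1^'n^'n) ** X = X ** mat a"
  by (simp add: Finite_Cartesian_Product.vec_eq_iff matrix_mul_mat_left_entry
      matrix_mul_mat_right_entry mult.commute)

lemma matrix_mul_mat_mat: "(mat a :: 'a::semiring_1^'n^'n) ** mat b = mat (a * b)"
  unfolding Finite_Cartesian_Product.vec_eq_iff matrix_mul_mat_left_entry
  by (simp add: Finite_Cartesian_Product.mat_def)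

lemma mat_plus: "(mat (a + b) :: 'a::semiring_1^'n^'n) = mat a + mat b"
  by (simp add: Finite_Cartesian_Product.vec_eq_iff Finite_Cartesian_Product.mat_def)

lemma matrix_add_rdistrib: "((A::'a::semiring_1^'n^'m) + B) ** C = A ** C + B ** C"
  by (simp add: matrix_matrix_mult_def Finite_Cartesian_Product.vec_eq_iff distrib_right
      sum.distrib)

lemma mat_pow_Suc_right: "mat_pow A (Suc k) = mat_pow A k ** A"
  by (induct k) (simp_all add: matrix_mul_assoc)

lemma mat_pow_add: "mat_pow A (a + b) = mat_pow A a ** mat_pow A b"
  by (induct a) (simp_all add: matrix_mul_assoc)

lemma mat_pow_mult: "mat_pow (mat_pow A a) b = mat_pow A (a * b)"
  by (induct b) (simp_all add: mat_pow_add algebra_simps)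

definition poly_mat :: "'a::comm_ring_1 poly \<Rightarrow> 'a^'n^'n \<Rightarrow> 'a^'n^'n" where
  "poly_mat p N = fold_coeffs (\<lambda>a X. mat a + N ** X) p 0"

lemma poly_mat_0 [simp]: "poly_mat 0 N = 0"
  by (simp add: poly_mat_def)

lemma poly_mat_pCons: "poly_mat (pCons a p) N = mat a + N ** poly_mat p N"
  by (cases "p = 0"; cases "a = 0")
    (simp_all add: poly_mat_def fold_coeffs_pCons_coeff_not_0_eq fold_coeffs_pCons_not_0_0_eq)

lemma poly_mat_add: "poly_mat (p + q) N = poly_mat p N + poly_mat q N"
  by (induct p q rule: poly_induct2)
    (simp_all add: poly_mat_pCons mat_plus matrix_add_ldistrib algebra_simps)

lemma poly_mat_smult: "poly_mat (Polynomial.smult c p) N = mat c ** poly_mat p N"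
proof (induct p)
  case (pCons a p)
  have "poly_mat (Polynomial.smult c (pCons a p)) N = mat (c * a) + N ** (mat c ** poly_mat p N)"
    by (simp add: poly_mat_pCons pCons)
  also have "\<dots> = mat c ** (mat a + N ** poly_mat p N)"
    by (simp add: matrix_add_ldistrib matrix_mul_mat_mat matrix_mul_assoc
        matrix_mul_mat_commute[of c N])
  finally show ?case by (simp add: poly_mat_pCons)
qed simp

lemma poly_mat_mult: "poly_mat (p * q) N = poly_mat p N ** poly_mat q N"
proof (induct p)
  case (pCons a p)
  have "poly_mat (pCons a p * q) N = mat a ** poly_mat q N + N ** (poly_mat p N ** poly_mat q N)"
    by (simp add: poly_mat_add poly_mat_smult poly_mat_pCons pCons)
  also have "\<dots> = (mat a + N ** poly_mat p N) ** poly_mat q N"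
    by (simp add: matrix_add_rdistrib matrix_mul_assoc)
  finally show ?case by (simp add: poly_mat_pCons)
qed simp

lemma poly_mat_const: "poly_mat [:c:] N = mat c"
  by (simp add: poly_mat_pCons)

lemma poly_mat_1: "poly_mat 1 N = mat 1"
  by (simp add: poly_mat_pCons one_pCons)

lemma poly_mat_X: "poly_mat [:0, 1:] N = N"
  by (simp add: poly_mat_pCons)

lemma poly_mat_power: "poly_mat (p ^ k) N = mat_pow (poly_mat p N) k"
  by (induct k) (simp_all add: poly_mat_1 poly_mat_mult)

lemma poly_mat_diff: "poly_mat (p - q) N = poly_mat p N - poly_mat q N"
  using poly_mat_add[of "p - q" q N] by (simp add: algebra_simps)

section \<open>Exponents of unipotent roots\<close>

lemma one_plus_power_minus_one_eq:
  "\<exists>h. (1 + x) ^ n - 1 = x * (of_nat n + x * (h::'a::comm_ring_1))"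
proof (induct n)
  case (Suc n)
  then obtain h where h: "(1 + x) ^ n - 1 = x * (of_nat n + x * h)" by blast
  have "(1 + x) ^ Suc n - 1 = (1 + x) * ((1 + x) ^ n - 1) + x"
    by (simp add: algebra_simps)
  also have "\<dots> = x * (of_nat (Suc n) + x * (h + of_nat n + x * h))"
    unfolding h by (simp add: algebra_simps)
  finally show ?case by blast
qed (intro exI[of _ 0], simp)

lemma power_add_mult_eq: "\<exists>q. (a + x * (h::'a::comm_ring_1)) ^ s = a ^ s + x * q"
proof (induct s)
  case (Suc s)
  then obtain q where q: "(a + x * h) ^ s = a ^ s + x * q" by blast
  have "(a + x * h) ^ Suc s = (a + x * h) * (a ^ s + x * q)"
    by (simp only: power_Suc q)
  also have "\<dots> = a ^ Suc s + x * (a ^ s * h + q * a + x * q * h)"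
    by (simp add: algebra_simps)
  finally show ?case by blast
qed (intro exI[of _ 0], simp)

(* (1 + X)^n - 1 = X (n + X h) in the polynomial ring, evaluated at N where X^(s+1) vanishes. *)
lemma one_plus_nilpotent_power_minus_one:
  fixes N :: "'a::comm_ring_1^'n^'n"
  assumes N: "mat_pow N (Suc s) = 0"
  shows "mat_pow (mat_pow (mat 1 + N) n - mat 1) s = mat (of_nat n ^ s) ** mat_pow N s"
    and "mat_pow (mat_pow (mat 1 + N) n - mat 1) (Suc s) = 0"
proof -
  let ?X = "[:0, 1:] :: 'a poly"
  obtain h where h: "(1 + ?X) ^ n - 1 = ?X * (of_nat n + ?X * h)"
    using one_plus_power_minus_one_eq by blast
  obtain q where q: "(of_nat n + ?X * h) ^ s = of_nat n ^ s + ?X * q"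
    using power_add_mult_eq by blast
  have M: "mat_pow (mat 1 + N) n - mat 1 = poly_mat ((1 + ?X) ^ n - 1) N"
    by (simp add: poly_mat_diff poly_mat_power poly_mat_add poly_mat_1 poly_mat_X)
  have "((1 + ?X) ^ n - 1) ^ s = [:of_nat n ^ s:] * ?X ^ s + ?X ^ Suc s * q"
    unfolding h power_mult_distrib q
    by (simp add: algebra_simps of_nat_poly Polynomial.poly_const_pow)
  then have "mat_pow (mat_pow (mat 1 + N) n - mat 1) s
      = mat (of_nat n ^ s) ** mat_pow N s + mat_pow N (Suc s) ** poly_mat q N"
    unfolding M poly_mat_power[symmetric]
    by (simp only: poly_mat_add poly_mat_mult poly_mat_const poly_mat_power poly_mat_X)
  then show "mat_pow (mat_pow (mat 1 + N) n - mat 1) s = mat (of_nat n ^ s) ** mat_pow N s"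
    using N by simp
  have "((1 + ?X) ^ n - 1) ^ Suc s = ?X ^ Suc s * (of_nat n + ?X * h) ^ Suc s"
    unfolding h power_mult_distrib ..
  then have "mat_pow (mat_pow (mat 1 + N) n - mat 1) (Suc s)
      = mat_pow N (Suc s) ** poly_mat ((of_nat n + ?X * h) ^ Suc s) N"
    unfolding M poly_mat_power[symmetric] by (simp only: poly_mat_mult poly_mat_power poly_mat_X)
  then show "mat_pow (mat_pow (mat 1 + N) n - mat 1) (Suc s) = 0"
    using N by simp
qed

(* If N^s is nonzero but N^(s+1) = 0, then M^s = n^s N^s has an entry of modulus at least n. *)
lemma exponent_le_of_unipotent_root:
  fixes M N :: "int^'n^'n"
  assumes N: "mat_pow N CARD('n) = 0"
    and M: "mat_pow (mat 1 + N) n = mat 1 + M"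
    and "M \<noteq> 0"
  shows "int n \<le> (\<Sum>s<CARD('n). \<Sum>a\<in>UNIV. \<Sum>b\<in>UNIV. \<bar>mat_pow M s $ a $ b\<bar>)"
proof -
  have M_eq: "M = mat_pow (mat 1 + N) n - mat 1"
    using M by simp
  have N': "mat_pow N (Suc (CARD('n) - 1)) = 0"
    using N by simp
  define s where "s = (LEAST s. mat_pow N (Suc s) = 0)"
  have Ns: "mat_pow N (Suc s) = 0"
    unfolding s_def by (rule LeastI[where P = "\<lambda>s. mat_pow N (Suc s) = 0", OF N'])
  have "s \<le> CARD('n) - 1"
    unfolding s_def by (rule Least_le[where P = "\<lambda>s. mat_pow N (Suc s) = 0", OF N'])
  then have "s < CARD('n)"
    using zero_less_card_finite[where 'a = 'n] by linarith
  have "s \<noteq> 0"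
  proof
    assume "s = 0"
    then show False
      using one_plus_nilpotent_power_minus_one(2)[OF Ns, of n] M_eq \<open>M \<noteq> 0\<close> by simp
  qed
  have "mat_pow N s \<noteq> 0"
    using \<open>s \<noteq> 0\<close> not_less_Least[of "s - 1" "\<lambda>s. mat_pow N (Suc s) = 0"] by (simp add: s_def)
  then obtain a b where "mat_pow N s $ a $ b \<noteq> 0"
    by (metis Finite_Cartesian_Product.vec_eq_iff zero_index)
  then have entry: "1 \<le> \<bar>mat_pow N s $ a $ b\<bar>"
    by linarith
  have Ms: "mat_pow M s $ a $ b = int n ^ s * mat_pow N s $ a $ b"
    using one_plus_nilpotent_power_minus_one(1)[OF Ns, of n] M_eq
    by (simp add: matrix_mul_mat_left_entry)
  have "int n \<le> int n ^ s"
    using \<open>s \<noteq> 0\<close> by (cases "n = 0") (simp_all add: self_le_power)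
  also have "\<dots> \<le> \<bar>int n ^ s * mat_pow N s $ a $ b\<bar>"
    using entry by (simp add: abs_mult mult_le_cancel_left1)
  also have "\<dots> \<le> (\<Sum>b\<in>UNIV. \<bar>mat_pow M s $ a $ b\<bar>)"
    unfolding Ms[symmetric] by (rule member_le_sum) auto
  also have "\<dots> \<le> (\<Sum>a\<in>UNIV. \<Sum>b\<in>UNIV. \<bar>mat_pow M s $ a $ b\<bar>)"
    by (rule member_le_sum[where i = a]) (auto intro: sum_nonneg)
  also have "\<dots> \<le> (\<Sum>s<CARD('n). \<Sum>a\<in>UNIV. \<Sum>b\<in>UNIV. \<bar>mat_pow M s $ a $ b\<bar>)"
    using \<open>s < CARD('n)\<close> by (intro member_le_sum[where i = s]) (auto intro: sum_nonneg)
  finally show ?thesis .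
qed

definition unipotent :: "'a::ring_1^'n^'n \<Rightarrow> bool" where
  "unipotent V \<longleftrightarrow> mat_pow (V - mat 1) CARD('n) = 0"

lemma finite_exponents_of_unipotent_roots:
  fixes U :: "int^'n^'n"
  assumes "U \<noteq> mat 1"
  shows "finite {n. \<exists>V. unipotent V \<and> mat_pow V n = U}"
proof -
  define C where "C = (\<Sum>s<CARD('n). \<Sum>a\<in>UNIV. \<Sum>b\<in>UNIV. \<bar>mat_pow (U - mat 1) s $ a $ b\<bar>)"
  have "{n. \<exists>V. unipotent V \<and> mat_pow V n = U} \<subseteq> {..nat C}"
  proof
    fix n assume "n \<in> {n. \<exists>V. unipotent V \<and> mat_pow V n = U}"
    then obtain V where "unipotent V" "mat_pow V n = U" by blast
    then have "int n \<le> C"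
      unfolding C_def using assms
      by (intro exponent_le_of_unipotent_root[of "V - mat 1"]) (auto simp: unipotent_def)
    then show "n \<in> {..nat C}" by simp
  qed
  then show ?thesis
    by (rule finite_subset) simp
qed

lemma power_eq_one_if_unipotent_roots:
  fixes A :: "int^'n^'n" and B :: "nat \<Rightarrow> int^'n^'n"
  assumes "infinite (n ` J)"
    and "\<And>i. i \<in> J \<Longrightarrow> unipotent (mat_pow (B i) L) \<and> mat_pow (B i) (n i) = A"
  shows "mat_pow A L = mat 1"
proof (rule ccontr)
  assume "mat_pow A L \<noteq> mat 1"
  then have "finite {k. \<exists>V. unipotent V \<and> mat_pow V k = mat_pow A L}"
    by (rule finite_exponents_of_unipotent_roots)
  moreover have "mat_pow (mat_pow (B i) L) (n i) = mat_pow A L" if "i \<in> J" for i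
  proof -
    have "mat_pow (mat_pow (B i) L) (n i) = mat_pow (mat_pow (B i) (n i)) L"
      by (simp add: mat_pow_mult mult.commute)
    then show ?thesis
      using assms(2)[OF that] by simp
  qed
  then have "n ` J \<subseteq> {k. \<exists>V. unipotent V \<and> mat_pow V k = mat_pow A L}"
    using assms(2) by blast
  ultimately show False
    using assms(1) finite_subset by blast
qed

section \<open>Cartesian matrices as JNF matrices\<close>

definition index_enum :: "nat \<Rightarrow> 'n::finite" where
  "index_enum = (SOME h. bij_betw h {0..<CARD('n)} UNIV)"

lemma bij_index_enum: "bij_betw (index_enum :: nat \<Rightarrow> 'n::finite) {0..<CARD('n)} UNIV"
proof -
  have "\<exists>h. bij_betw h {0..<CARD('n)} (UNIV :: 'n set)"
    using ex_bij_betw_nat_finite[of "UNIV :: 'n set"] by simp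
  then show ?thesis
    unfolding index_enum_def by (rule someI_ex)
qed

definition mat_of_cart :: "'a^'n^'n \<Rightarrow> 'a mat" where
  "mat_of_cart X = Matrix.mat CARD('n) CARD('n) (\<lambda>(i, j). X $ index_enum i $ index_enum j)"

lemma mat_of_cart_carrier [simp]: "mat_of_cart (X :: 'a^'n^'n) \<in> carrier_mat CARD('n) CARD('n)"
  by (simp add: mat_of_cart_def)

lemma mat_of_cart_dim [simp]:
  "dim_row (mat_of_cart (X :: 'a^'n^'n)) = CARD('n)"
  "dim_col (mat_of_cart (X :: 'a^'n^'n)) = CARD('n)"
  by (simp_all add: mat_of_cart_def)

lemma mat_of_cart_index:
  "i < CARD('n) \<Longrightarrow> j < CARD('n) \<Longrightarrow>
    mat_of_cart (X :: 'a^'n^'n) $$ (i, j) = X $ index_enum i $ index_enum j"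
  by (simp add: mat_of_cart_def)

lemma mat_of_cart_mult:
  "mat_of_cart ((X :: 'a::semiring_1^'n^'n) ** Y) = mat_of_cart X * mat_of_cart Y"
proof (rule eq_matI)
  fix i j
  assume "i < dim_row (mat_of_cart X * mat_of_cart Y)" "j < dim_col (mat_of_cart X * mat_of_cart Y)"
  then have i: "i < CARD('n)" and j: "j < CARD('n)"
    by simp_all
  have "(mat_of_cart X * mat_of_cart Y) $$ (i, j)
      = (\<Sum>l\<in>{0..<CARD('n)}. X $ index_enum i $ index_enum l * Y $ index_enum l $ index_enum j)"
    using i j by (simp add: scalar_prod_def mat_of_cart_def)
  also have "\<dots> = (\<Sum>k\<in>UNIV. X $ index_enum i $ k * Y $ k $ index_enum j)"
    by (rule sum.reindex_bij_betw[OF bij_index_enum])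
  also have "\<dots> = mat_of_cart (X ** Y) $$ (i, j)"
    using i j by (simp add: mat_of_cart_def matrix_matrix_mult_def)
  finally show "mat_of_cart (X ** Y) $$ (i, j) = (mat_of_cart X * mat_of_cart Y) $$ (i, j)"
    by simp
qed simp_all

lemma mat_of_cart_one: "mat_of_cart (mat 1 :: 'a::semiring_1^'n^'n) = 1\<^sub>m CARD('n)"
proof (rule eq_matI)
  fix i j
  assume "i < dim_row (1\<^sub>m CARD('n) :: 'a mat)" "j < dim_col (1\<^sub>m CARD('n) :: 'a mat)"
  then have i: "i < CARD('n)" and j: "j < CARD('n)"
    by simp_all
  have "(index_enum i :: 'n) = index_enum j \<longleftrightarrow> i = j"
    using bij_index_enum[where 'n = 'n] i j unfolding bij_betw_def inj_on_def by auto
  then show "mat_of_cart (mat 1 :: 'a^'n^'n) $$ (i, j) = 1\<^sub>m CARD('n) $$ (i, j)"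
    using i j by (simp add: mat_of_cart_index Finite_Cartesian_Product.mat_def)
qed simp_all

lemma mat_of_cart_minus:
  "mat_of_cart ((X :: 'a::ab_group_add^'n^'n) - Y) = mat_of_cart X - mat_of_cart Y"
  by (rule eq_matI) (simp_all add: mat_of_cart_def)

lemma mat_of_cart_zero: "mat_of_cart (0 :: 'a::zero^'n^'n) = 0\<^sub>m CARD('n) CARD('n)"
  by (rule eq_matI) (simp_all add: mat_of_cart_def)

lemma mat_of_cart_eq_iff: "mat_of_cart (X :: 'a^'n^'n) = mat_of_cart Y \<longleftrightarrow> X = Y"
proof
  assume eq: "mat_of_cart X = mat_of_cart Y"
  have "X $ a $ b = Y $ a $ b" for a b
  proof -
    obtain i j where "i < CARD('n)" "j < CARD('n)" "index_enum i = a" "index_enum j = b"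
      using bij_index_enum[where 'n = 'n] unfolding bij_betw_def
      by (metis UNIV_I atLeastLessThan_iff imageE)
    then show ?thesis
      using eq by (metis mat_of_cart_index)
  qed
  then show "X = Y"
    by (simp add: Finite_Cartesian_Product.vec_eq_iff)
qed simp

lemma mat_of_cart_pow:
  "mat_of_cart (mat_pow (X :: 'a::semiring_1^'n^'n) k) = mat_of_cart X ^\<^sub>m k"
  by (induct k)
    (simp_all add: mat_pow_Suc_right mat_of_cart_mult mat_of_cart_one del: mat_pow.simps(2))

lemma unipotent_iff_mat_of_cart:
  "unipotent (X :: 'a::comm_ring_1^'n^'n)
    \<longleftrightarrow> (mat_of_cart X - 1\<^sub>m CARD('n)) ^\<^sub>m CARD('n) = 0\<^sub>m CARD('n) CARD('n)"
  unfolding unipotent_def mat_of_cart_eq_iff[symmetric]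
  by (simp add: mat_of_cart_pow mat_of_cart_minus mat_of_cart_one mat_of_cart_zero)

section \<open>Powers of triangular matrices\<close>

definition upper_triangular_from :: "nat \<Rightarrow> 'a::zero mat \<Rightarrow> bool" where
  "upper_triangular_from k X \<longleftrightarrow> (\<forall>i<dim_row X. \<forall>j<dim_col X. j < i + k \<longrightarrow> X $$ (i, j) = 0)"

lemma upper_triangular_from_0:
  "X \<in> carrier_mat d d \<Longrightarrow> upper_triangular_from 0 X \<longleftrightarrow> upper_triangular X"
  by (auto simp: upper_triangular_from_def upper_triangular_def)

lemma upper_triangular_from_one: "upper_triangular_from 0 (1\<^sub>m d)"
  by (simp add: upper_triangular_from_def)

lemma index_mult_mat_square:
  "X \<in> carrier_mat d d \<Longrightarrow> Y \<in> carrier_mat d d \<Longrightarrow> i < d \<Longrightarrow> j < d \<Longrightarrow>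
    (X * Y) $$ (i, j) = (\<Sum>m\<in>{0..<d}. X $$ (i, m) * Y $$ (m, j))"
  by (simp add: scalar_prod_def)

lemma upper_triangular_from_mult:
  fixes X Y :: "'a::semiring_0 mat"
  assumes X: "X \<in> carrier_mat d d" and Y: "Y \<in> carrier_mat d d"
    and k: "upper_triangular_from k X" and l: "upper_triangular_from l Y"
  shows "upper_triangular_from (k + l) (X * Y)"
  unfolding upper_triangular_from_def
proof (intro allI impI)
  fix i j
  assume "i < dim_row (X * Y)" "j < dim_col (X * Y)" "j < i + (k + l)"
  then have i: "i < d" and j: "j < d" and ij: "j < i + (k + l)"
    using X Y by simp_all
  have "X $$ (i, m) * Y $$ (m, j) = 0" if "m < d" for m
  proof (cases "m < i + k")
    case True
    then show ?thesis
      using k X i that unfolding upper_triangular_from_def by simp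
  next
    case False
    then show ?thesis
      using l Y j ij that unfolding upper_triangular_from_def by simp
  qed
  then show "(X * Y) $$ (i, j) = 0"
    using index_mult_mat_square[OF X Y i j] by simp
qed

lemma diag_mult_upper_triangular_from:
  fixes X Y :: "'a::semiring_0 mat"
  assumes X: "X \<in> carrier_mat d d" and Y: "Y \<in> carrier_mat d d"
    and X0: "upper_triangular_from 0 X" and Y0: "upper_triangular_from 0 Y" and i: "i < d"
  shows "(X * Y) $$ (i, i) = X $$ (i, i) * Y $$ (i, i)"
proof -
  have "X $$ (i, m) * Y $$ (m, i) = (if m = i then X $$ (i, i) * Y $$ (i, i) else 0)"
    if m: "m \<in> {0..<d}" for m
  proof (cases "m < i")
    case True
    then show ?thesis
      using X0 X i m unfolding upper_triangular_from_def by simp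
  next
    case False
    then show ?thesis
      using Y0 Y i m unfolding upper_triangular_from_def by simp
  qed
  then have "(X * Y) $$ (i, i) = (\<Sum>m\<in>{0..<d}. if m = i then X $$ (i, i) * Y $$ (i, i) else 0)"
    unfolding index_mult_mat_square[OF X Y i i] by (rule sum.cong[OF refl])
  then show ?thesis
    using i by simp
qed

lemma upper_triangular_from_pow:
  fixes T :: "'a::comm_semiring_1 mat"
  assumes T: "T \<in> carrier_mat d d" and T0: "upper_triangular_from 0 T"
  shows "upper_triangular_from 0 (T ^\<^sub>m k) \<and> (\<forall>i<d. (T ^\<^sub>m k) $$ (i, i) = T $$ (i, i) ^ k)"
proof (induct k)
  case 0
  then show ?case
    using upper_triangular_from_one T by simp
next
  case (Suc k)
  have Tk: "T ^\<^sub>m k \<in> carrier_mat d d"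
    using T by simp
  then show ?case
    using Suc upper_triangular_from_mult[OF Tk T _ T0] diag_mult_upper_triangular_from[OF Tk T _ T0]
    by (simp add: mult.commute)
qed

lemma upper_triangular_from_pow_strict:
  fixes S :: "'a::semiring_1 mat"
  assumes S: "S \<in> carrier_mat d d" and S1: "upper_triangular_from 1 S"
  shows "upper_triangular_from k (S ^\<^sub>m k)"
proof (induct k)
  case 0
  then show ?case
    using upper_triangular_from_one S by simp
next
  case (Suc k)
  have "S ^\<^sub>m k \<in> carrier_mat d d"
    using S by simp
  from upper_triangular_from_mult[OF this S Suc S1] show ?case
    by simp
qed

lemma upper_triangular_from_dim_eq_0:
  "X \<in> carrier_mat d d \<Longrightarrow> upper_triangular_from d X \<Longrightarrow> X = 0\<^sub>m d d"
  by (intro eq_matI) (auto simp: upper_triangular_from_def)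

lemma upper_triangular_power_minus_one_nilpotent:
  fixes T :: "'a::comm_ring_1 mat"
  assumes T: "T \<in> carrier_mat d d" and "upper_triangular T"
    and diag: "\<And>i. i < d \<Longrightarrow> T $$ (i, i) ^ L = 1"
  shows "(T ^\<^sub>m L - 1\<^sub>m d) ^\<^sub>m d = 0\<^sub>m d d"
proof -
  have T0: "upper_triangular_from 0 T"
    using assms(2) T by (simp add: upper_triangular_from_0)
  have TL: "T ^\<^sub>m L \<in> carrier_mat d d"
    using T by simp
  let ?S = "T ^\<^sub>m L - 1\<^sub>m d"
  have S: "?S \<in> carrier_mat d d"
    by (intro carrier_matI) simp_all
  from upper_triangular_from_pow[OF T T0, of L]
  have TL0: "upper_triangular_from 0 (T ^\<^sub>m L)" and TL1: "\<And>i. i < d \<Longrightarrow> (T ^\<^sub>m L) $$ (i, i) = 1"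
    using diag by auto
  have "upper_triangular_from 1 ?S"
    unfolding upper_triangular_from_def
  proof (intro allI impI)
    fix i j
    assume "i < dim_row ?S" "j < dim_col ?S" "j < i + 1"
    then have i: "i < d" and j: "j < d" and "j < i \<or> j = i"
      by auto
    then show "?S $$ (i, j) = 0"
    proof (elim disjE)
      assume "j < i"
      then show ?thesis
        using TL0 T i j unfolding upper_triangular_from_def by simp
    next
      assume "j = i"
      then show ?thesis
        using TL1 TL i by simp
    qed
  qed
  from upper_triangular_from_pow_strict[OF S this, of d] S show ?thesis
    by (simp add: upper_triangular_from_dim_eq_0)
qed

lemma similar_mat_wit_power_minus_one:
  assumes wit: "similar_mat_wit A B P Q" and A: "(A :: 'a::comm_ring_1 mat) \<in> carrier_mat d d"
  shows "similar_mat_wit (A ^\<^sub>m L - 1\<^sub>m d) (B ^\<^sub>m L - 1\<^sub>m d) P Q"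
proof -
  from wit A have B: "B \<in> carrier_mat d d" and P: "P \<in> carrier_mat d d" and Q: "Q \<in> carrier_mat d d"
    and PQ: "P * Q = 1\<^sub>m d" and QP: "Q * P = 1\<^sub>m d"
    unfolding similar_mat_wit_def Let_def by auto
  have BL: "B ^\<^sub>m L \<in> carrier_mat d d"
    using B by simp
  have "P * (B ^\<^sub>m L - 1\<^sub>m d) * Q = (P * B ^\<^sub>m L - P * 1\<^sub>m d) * Q"
    using P BL by (simp add: mult_minus_distrib_mat)
  also have "\<dots> = P * B ^\<^sub>m L * Q - P * 1\<^sub>m d * Q"
    using P BL Q by (intro minus_mult_distrib_mat) auto
  also have "\<dots> = A ^\<^sub>m L - 1\<^sub>m d"
    using similar_mat_wit_pow_id[OF wit] P PQ by simp
  finally show ?thesis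
    using P Q PQ QP BL by (intro similar_mat_witI[of _ _ d]) auto
qed

lemma unipotent_power_if_eigenvalues_roots_of_unity:
  fixes A :: "complex mat"
  assumes A: "A \<in> carrier_mat d d" and roots: "\<And>z. eigenvalue A z \<Longrightarrow> z ^ L = 1"
  shows "(A ^\<^sub>m L - 1\<^sub>m d) ^\<^sub>m d = 0\<^sub>m d d"
proof -
  obtain es where "char_poly A = (\<Prod>a\<leftarrow>es. [:- a, 1:])"
    using char_poly_factorized[OF A] by blast
  from schur_upper_triangular[OF A this] obtain T
    where T: "T \<in> carrier_mat d d" and ut: "upper_triangular T" and sim: "similar_mat A T"
    by blast
  then obtain P Q where wit: "similar_mat_wit A T P Q"
    unfolding similar_mat_def by blast
  have diag: "T $$ (i, i) ^ L = 1" if i: "i < d" for i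
  proof -
    have "char_poly A = (\<Prod>a\<leftarrow>diag_mat T. [:- a, 1:])"
      using char_poly_similar[OF sim] char_poly_upper_triangular[OF T ut] by simp
    moreover have "T $$ (i, i) \<in> set (diag_mat T)"
      using T i unfolding diag_mat_def by auto
    ultimately have "poly (char_poly A) (T $$ (i, i)) = 0"
      by (simp add: linear_poly_root)
    then show ?thesis
      using roots eigenvalue_root_char_poly[OF A] by blast
  qed
  have "similar_mat_wit (A ^\<^sub>m L - 1\<^sub>m d) (T ^\<^sub>m L - 1\<^sub>m d) P Q"
    by (rule similar_mat_wit_power_minus_one[OF wit A])
  then have "(A ^\<^sub>m L - 1\<^sub>m d) ^\<^sub>m d = P * (T ^\<^sub>m L - 1\<^sub>m d) ^\<^sub>m d * Q"
    by (rule similar_mat_wit_pow_id)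
  also have "\<dots> = P * 0\<^sub>m d d * Q"
    by (simp only: upper_triangular_power_minus_one_nilpotent[OF T ut diag])
  also have "\<dots> = 0\<^sub>m d d"
    using wit A unfolding similar_mat_wit_def Let_def by auto
  finally show ?thesis .
qed

section \<open>Characteristic polynomials of roots\<close>

lemma eigenvalue_pow:
  assumes A: "A \<in> carrier_mat n n" and "eigenvalue A \<mu>"
  shows "eigenvalue (A ^\<^sub>m k) (\<mu> ^ k)"
proof -
  obtain v where v: "eigenvector A v \<mu>"
    using assms(2) unfolding eigenvalue_def by blast
  then have "eigenvector (A ^\<^sub>m k) v (\<mu> ^ k)"
    using eigenvector_pow[OF A v, of k] A unfolding eigenvector_def by simp
  then show ?thesis
    unfolding eigenvalue_def by blast
qed

lemma not_eigenvalue_zero_if_left_inverse: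
  fixes A :: "'a::comm_ring_1 mat"
  assumes A: "A \<in> carrier_mat n n" and A': "A' \<in> carrier_mat n n" and inv: "A' * A = 1\<^sub>m n"
  shows "\<not> eigenvalue A 0"
proof
  assume "eigenvalue A 0"
  then obtain v where v: "v \<in> carrier_vec n" "v \<noteq> 0\<^sub>v n" and Av: "A *\<^sub>v v = 0 \<cdot>\<^sub>v v"
    using A unfolding eigenvalue_def eigenvector_def by auto
  have "v = (A' * A) *\<^sub>v v"
    using v by (simp add: inv)
  also have "\<dots> = A' *\<^sub>v (A *\<^sub>v v)"
    using A A' v by (simp add: assoc_mult_mat_vec)
  also have "\<dots> = 0\<^sub>v n"
    unfolding Av using A' v by (intro eq_vecI) (auto simp: scalar_prod_def)
  finally show False
    using v by simp
qed

lemma norm_eigenvalue_of_root_le: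
  fixes A B :: "complex mat"
  assumes B: "B \<in> carrier_mat d d" and "0 < k" and "B ^\<^sub>m k = A" and "eigenvalue B \<mu>"
  shows "cmod \<mu> \<le> max 1 (spectral_radius A)"
proof (rule ccontr)
  assume "\<not> ?thesis"
  then have gt: "1 < cmod \<mu>" "spectral_radius A < cmod \<mu>"
    by auto
  have "eigenvalue A (\<mu> ^ k)"
    using eigenvalue_pow[OF B assms(4), of k] assms(3) by simp
  moreover have A: "A \<in> carrier_mat d d"
    using B assms(3) by auto
  ultimately have "cmod (\<mu> ^ k) \<le> spectral_radius A"
    using spectral_radius_mem_max(2)[OF A] eigenvalue_imp_nonzero_dim[OF A]
    by (simp add: spectrum_def)
  moreover have "cmod \<mu> \<le> cmod (\<mu> ^ k)"
    using gt(1) \<open>0 < k\<close> by (simp add: norm_power self_le_power)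
  ultimately show False
    using gt(2) by linarith
qed

lemma norm_coeff_prod_linear_le:
  fixes as :: "complex list"
  assumes "\<And>a. a \<in> set as \<Longrightarrow> cmod a \<le> R" and "0 \<le> R"
  shows "cmod (coeff (\<Prod>a\<leftarrow>as. [:- a, 1:]) k) \<le> (1 + R) ^ length as"
  using assms(1)
proof (induct as arbitrary: k)
  case Nil
  then show ?case
    by (cases k) simp_all
next
  case (Cons a as)
  let ?p = "\<Prod>a\<leftarrow>as. [:- a, 1:]"
  have IH: "cmod (coeff ?p j) \<le> (1 + R) ^ length as" for j
    using Cons by simp
  have "coeff (\<Prod>a\<leftarrow>a # as. [:- a, 1:]) k = - a * coeff ?p k + (case k of 0 \<Rightarrow> 0 | Suc j \<Rightarrow> coeff ?p j)"
    by (cases k) (simp_all add: mult_pCons_left)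
  moreover have "cmod (- a * coeff ?p k) \<le> R * (1 + R) ^ length as"
    unfolding norm_mult norm_minus_cancel using Cons.prems IH assms(2)
    by (intro mult_mono) auto
  moreover have "cmod (case k of 0 \<Rightarrow> 0 | Suc j \<Rightarrow> coeff ?p j) \<le> (1 + R) ^ length as"
    using IH assms(2) by (cases k) simp_all
  ultimately have "cmod (coeff (\<Prod>a\<leftarrow>a # as. [:- a, 1:]) k) \<le> R * (1 + R) ^ length as + (1 + R) ^ length as"
    by (metis add_mono norm_triangle_le)
  then show ?case
    by (simp add: algebra_simps)
qed

lemma norm_coeff_char_poly_le:
  fixes B :: "complex mat"
  assumes B: "B \<in> carrier_mat d d" and "0 \<le> R" and bound: "\<And>\<mu>. eigenvalue B \<mu> \<Longrightarrow> cmod \<mu> \<le> R"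
  shows "cmod (coeff (char_poly B) k) \<le> (1 + R) ^ d"
proof -
  obtain as where as: "char_poly B = (\<Prod>a\<leftarrow>as. [:- a, 1:])" and "length as = d"
    using char_poly_factorized[OF B] by blast
  have roots: "cmod a \<le> R" if "a \<in> set as" for a
    using bound eigenvalue_root_char_poly[OF B] linear_poly_root[OF that] as by simp
  have "cmod (coeff (\<Prod>a\<leftarrow>as. [:- a, 1:]) k) \<le> (1 + R) ^ length as"
    by (rule norm_coeff_prod_linear_le[OF roots \<open>0 \<le> R\<close>])
  then show ?thesis
    using as \<open>length as = d\<close> by simp
qed

lemma finite_int_polys_bounded: "finite {p :: int poly. degree p \<le> d \<and> (\<forall>k. \<bar>coeff p k\<bar> \<le> C)}"
proof -
  have "{p :: int poly. degree p \<le> d \<and> (\<forall>k. \<bar>coeff p k\<bar> \<le> C)}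
      \<subseteq> Poly ` {xs. set xs \<subseteq> {-C..C} \<and> length xs \<le> Suc d}"
  proof clarify
    fix p :: "int poly"
    assume p: "degree p \<le> d" "\<forall>k. \<bar>coeff p k\<bar> \<le> C"
    have "set (coeffs p) \<subseteq> range (coeff p)"
      by (cases "p = 0") (auto simp: coeffs_def)
    also have "range (coeff p) \<subseteq> {-C..C}"
      using p(2) by (auto simp: abs_le_iff minus_le_iff)
    finally have "set (coeffs p) \<subseteq> {-C..C}" .
    moreover have "length (coeffs p) \<le> Suc d"
      using p(1) unfolding coeffs_def by auto
    ultimately show "p \<in> Poly ` {xs. set xs \<subseteq> {-C..C} \<and> length xs \<le> Suc d}"
      by (intro image_eqI[of _ _ "coeffs p"]) simp_all
  qed
  moreover have "finite (Poly ` {xs. set xs \<subseteq> {-C..C} \<and> length xs \<le> Suc d})"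
    by (intro finite_imageI finite_lists_length_le) simp
  ultimately show ?thesis
    by (rule finite_subset)
qed

lemma finite_char_polys_of_roots:
  fixes A :: "int mat"
  assumes A: "A \<in> carrier_mat d d"
  shows "finite {char_poly B | B k. B \<in> carrier_mat d d \<and> 0 < k \<and> B ^\<^sub>m k = A}"
proof -
  define R where "R = max 1 (spectral_radius (of_int_hom.mat_hom A))"
  define C where "C = \<lceil>(1 + R) ^ d\<rceil>"
  have "char_poly B \<in> {p. degree p \<le> d \<and> (\<forall>j. \<bar>coeff p j\<bar> \<le> C)}"
    if B: "B \<in> carrier_mat d d" and "0 < k" and "B ^\<^sub>m k = A" for B k
  proof -
    let ?Bc = "of_int_hom.mat_hom B :: complex mat"
    have Bc: "?Bc \<in> carrier_mat d d"
      using B by simp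
    have "?Bc ^\<^sub>m k = of_int_hom.mat_hom A"
      by (simp add: of_int_hom.mat_hom_pow[OF B] flip: \<open>B ^\<^sub>m k = A\<close>)
    then have "cmod (coeff (char_poly ?Bc) j) \<le> (1 + R) ^ d" for j
      using norm_eigenvalue_of_root_le[OF Bc \<open>0 < k\<close>]
      by (intro norm_coeff_char_poly_le[OF Bc]) (auto simp: R_def)
    then have bound: "real_of_int \<bar>coeff (char_poly B) j\<bar> \<le> (1 + R) ^ d" for j
      by (simp add: of_int_hom.char_poly_hom[OF B] coeff_map_poly)
    have "\<bar>coeff (char_poly B) j\<bar> \<le> C" for j
      unfolding C_def le_ceiling_iff using bound[of j] by linarith
    moreover have "degree (char_poly B) = d"
      using degree_monic_char_poly[OF B] by simp
    ultimately show ?thesis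
      by simp
  qed
  then show ?thesis
    by (intro finite_subset[OF _ finite_int_polys_bounded]) blast
qed

lemma root_of_unity_if_powers_in_finite:
  fixes z :: "'a::idom"
  assumes "z \<noteq> 0" and "infinite K" and "finite S" and "\<And>k. k \<in> K \<Longrightarrow> z ^ k \<in> S"
  shows "\<exists>k>0. z ^ k = 1"
proof -
  have "\<not> inj_on (\<lambda>k. z ^ k) K"
    using assms(2-4) finite_imageD finite_subset[of "(\<lambda>k. z ^ k) ` K" S] by blast
  then obtain a b where "a < b" and "z ^ a = z ^ b"
    unfolding inj_on_def by (metis linorder_neqE_nat)
  moreover have "z ^ b = z ^ a * z ^ (b - a)"
    using \<open>a < b\<close> by (simp flip: power_add)
  ultimately have "z ^ a * z ^ (b - a) = z ^ a * 1"
    by simp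
  then show ?thesis
    using \<open>z \<noteq> 0\<close> \<open>a < b\<close> by (intro exI[of _ "b - a"]) simp
qed

lemma common_exponent_of_roots_of_unity:
  fixes Z :: "'a::monoid_mult set"
  assumes "finite Z" and "\<And>z. z \<in> Z \<Longrightarrow> \<exists>k>0. z ^ k = 1"
  shows "\<exists>L>0. \<forall>z\<in>Z. z ^ L = 1"
  using assms
proof (induct Z rule: finite_induct)
  case empty
  then show ?case
    by (intro exI[of _ 1]) simp
next
  case (insert w Z)
  then obtain L where "L > 0" and L: "\<forall>z\<in>Z. z ^ L = 1"
    by blast
  obtain k where "k > 0" and "w ^ k = 1"
    using insert.prems by blast
  then have "w ^ (L * k) = 1"
    by (simp add: power_mult mult.commute[of L k])
  moreover have "\<forall>z\<in>Z. z ^ (L * k) = 1"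
    using L by (simp add: power_mult)
  ultimately show ?case
    using \<open>L > 0\<close> \<open>k > 0\<close> by (intro exI[of _ "L * k"]) simp
qed

lemma root_of_unity_if_eigenvalue_of_roots:
  fixes A :: "'a::field mat"
  assumes A: "A \<in> carrier_mat d d" and A0: "\<not> eigenvalue A 0" and "infinite K"
    and roots: "\<And>k. k \<in> K \<Longrightarrow> \<exists>B \<in> carrier_mat d d. B ^\<^sub>m k = A \<and> eigenvalue B z"
  shows "\<exists>k>0. z ^ k = 1"
proof (rule root_of_unity_if_powers_in_finite)
  show powers: "z ^ k \<in> spectrum A" if "k \<in> K" for k
    using roots[OF that] eigenvalue_pow by (auto simp: spectrum_def)
  obtain k where "k \<in> K" and "0 < k"
    using infinite_remove[OF \<open>infinite K\<close>, of 0]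
    by (metis DiffE ex_in_conv finite.emptyI gr0I singletonI)
  then show "z \<noteq> 0"
    using powers[OF \<open>k \<in> K\<close>] A0 by (auto simp: spectrum_def power_0_left)
qed (use assms card_finite_spectrum(1)[OF A] in auto)

section \<open>Unipotent powers of roots\<close>

lemma unipotent_power_of_int_mat:
  fixes B :: "int mat"
  assumes B: "B \<in> carrier_mat d d"
    and roots: "\<And>z. eigenvalue (of_int_hom.mat_hom B :: complex mat) z \<Longrightarrow> z ^ L = 1"
  shows "(B ^\<^sub>m L - 1\<^sub>m d) ^\<^sub>m d = 0\<^sub>m d d"
proof -
  let ?C = "of_int_hom.mat_hom :: int mat \<Rightarrow> complex mat"
  have BL: "B ^\<^sub>m L - 1\<^sub>m d \<in> carrier_mat d d"
    by (intro carrier_matI) simp_all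
  have "?C (B ^\<^sub>m L - 1\<^sub>m d) = ?C (B ^\<^sub>m L) - 1\<^sub>m d"
    using B by (intro eq_matI) auto
  then have "?C ((B ^\<^sub>m L - 1\<^sub>m d) ^\<^sub>m d) = (?C B ^\<^sub>m L - 1\<^sub>m d) ^\<^sub>m d"
    by (simp add: of_int_hom.mat_hom_pow[OF BL] of_int_hom.mat_hom_pow[OF B])
  also have "\<dots> = ?C (0\<^sub>m d d)"
    using unipotent_power_if_eigenvalues_roots_of_unity[of "?C B" d L] B roots by auto
  finally show ?thesis
    by (rule of_int_hom.mat_hom_inj)
qed

lemma spectrum_of_int_mat_eq:
  fixes X Y :: "int mat"
  assumes X: "X \<in> carrier_mat d d" and Y: "Y \<in> carrier_mat d d"
    and "char_poly X = char_poly Y"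
  shows "spectrum (of_int_hom.mat_hom X :: complex mat) = spectrum (of_int_hom.mat_hom Y)"
proof -
  have "char_poly (of_int_hom.mat_hom X :: complex mat) = char_poly (of_int_hom.mat_hom Y)"
    using assms by (simp add: of_int_hom.char_poly_hom)
  then show ?thesis
    using X Y by (simp add: spectrum_root_char_poly[of _ d])
qed

lemma infinite_image_fiber:
  assumes "infinite (n ` I)" and "finite (f ` I)"
  shows "\<exists>i\<in>I. infinite (n ` {j\<in>I. f j = f i})"
proof (rule ccontr)
  assume "\<not> ?thesis"
  then have "finite (\<Union>p\<in>f ` I. n ` {j\<in>I. f j = p})"
    by (intro finite_UN_I[OF assms(2)]) blast
  moreover have "n ` I = (\<Union>p\<in>f ` I. n ` {j\<in>I. f j = p})"
    by blast
  ultimately show False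
    using assms(1) by simp
qed

lemma unipotent_powers_of_int_roots:
  fixes A :: "int mat" and B :: "nat \<Rightarrow> int mat" and n :: "nat \<Rightarrow> nat"
  assumes A: "A \<in> carrier_mat d d"
    and A0: "\<not> eigenvalue (of_int_hom.mat_hom A :: complex mat) 0"
    and roots: "\<And>i. i \<in> I \<Longrightarrow> B i \<in> carrier_mat d d \<and> 0 < n i \<and> B i ^\<^sub>m n i = A"
    and "infinite (n ` I)"
  shows "\<exists>L>0. \<exists>J\<subseteq>I. infinite (n ` J) \<and> (\<forall>i\<in>J. (B i ^\<^sub>m L - 1\<^sub>m d) ^\<^sub>m d = 0\<^sub>m d d)"
proof -
  let ?C = "of_int_hom.mat_hom :: int mat \<Rightarrow> complex mat"
  have "finite ((\<lambda>i. char_poly (B i)) ` I)"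
    by (rule finite_subset[OF _ finite_char_polys_of_roots[OF A]]) (use roots in blast)
  then obtain i0 where "i0 \<in> I" and inf: "infinite (n ` {i\<in>I. char_poly (B i) = char_poly (B i0)})"
    using infinite_image_fiber[OF \<open>infinite (n ` I)\<close>] by blast
  define J where "J = {i\<in>I. char_poly (B i) = char_poly (B i0)}"
  define Z where "Z = spectrum (?C (B i0))"
  have spec: "spectrum (?C (B i)) = Z" if "i \<in> J" for i
    unfolding Z_def using that roots[of i] roots[OF \<open>i0 \<in> I\<close>]
    by (intro spectrum_of_int_mat_eq[of _ d]) (simp_all add: J_def)
  have "\<exists>k>0. z ^ k = 1" if "z \<in> Z" for z
  proof (rule root_of_unity_if_eigenvalue_of_roots)
    show "infinite (n ` J)"
      using inf by (simp add: J_def)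
    show "\<exists>X\<in>carrier_mat d d. X ^\<^sub>m k = ?C A \<and> eigenvalue X z" if "k \<in> n ` J" for k
    proof -
      obtain i where "i \<in> J" and "k = n i"
        using \<open>k \<in> n ` J\<close> by blast
      then have "?C (B i) \<in> carrier_mat d d" and "?C (B i) ^\<^sub>m k = ?C A"
        using roots[of i] by (auto simp: J_def of_int_hom.mat_hom_pow[symmetric])
      moreover have "eigenvalue (?C (B i)) z"
        using spec[OF \<open>i \<in> J\<close>] \<open>z \<in> Z\<close> unfolding spectrum_def by blast
      ultimately show ?thesis
        by blast
    qed
  qed (use A A0 in simp_all)
  moreover have "finite Z"
    unfolding Z_def using roots[OF \<open>i0 \<in> I\<close>] by (intro card_finite_spectrum(1)[of _ d]) simp
  ultimately obtain L where "L > 0" and L: "\<forall>z\<in>Z. z ^ L = 1"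
    using common_exponent_of_roots_of_unity by blast
  have "(B i ^\<^sub>m L - 1\<^sub>m d) ^\<^sub>m d = 0\<^sub>m d d" if "i \<in> J" for i
    using roots[of i] that spec[OF that] L
    by (intro unipotent_power_of_int_mat) (auto simp: J_def spectrum_def)
  moreover have "J \<subseteq> I" and "infinite (n ` J)"
    using inf by (auto simp: J_def)
  ultimately show ?thesis
    using \<open>L > 0\<close> by blast
qed

lemma unipotent_powers_of_roots:
  fixes A :: "int^'m^'m" and B :: "nat \<Rightarrow> int^'m^'m" and n :: "nat \<Rightarrow> nat"
  assumes "invertible A"
    and roots: "\<And>i. i \<in> I \<Longrightarrow> 0 < n i \<and> mat_pow (B i) (n i) = A"
    and "infinite (n ` I)"
  shows "\<exists>L>0. \<exists>J\<subseteq>I. infinite (n ` J) \<and> (\<forall>i\<in>J. unipotent (mat_pow (B i) L))"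
proof -
  let ?C = "of_int_hom.mat_hom :: int mat \<Rightarrow> complex mat"
  let ?d = "CARD('m)"
  obtain A' where "A' ** A = mat 1"
    using \<open>invertible A\<close> unfolding invertible_def by blast
  then have "mat_of_cart A' * mat_of_cart A = 1\<^sub>m ?d"
    by (metis mat_of_cart_mult mat_of_cart_one)
  then have "?C (mat_of_cart A') * ?C (mat_of_cart A) = 1\<^sub>m ?d"
    by (metis of_int_hom.mat_hom_mult mat_of_cart_carrier of_int_hom.mat_hom_one)
  then have A0: "\<not> eigenvalue (?C (mat_of_cart A)) 0"
    by (intro not_eigenvalue_zero_if_left_inverse[of _ ?d "?C (mat_of_cart A')"]) simp_all
  have roots_mat: "mat_of_cart (B i) \<in> carrier_mat ?d ?d \<and> 0 < n i \<and> mat_of_cart (B i) ^\<^sub>m n i = mat_of_cart A"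
    if "i \<in> I" for i
    using roots[OF that] by (simp add: mat_of_cart_pow[symmetric])
  obtain L J where "L > 0" "J \<subseteq> I" "infinite (n ` J)"
    and nilpotent: "\<forall>i\<in>J. (mat_of_cart (B i) ^\<^sub>m L - 1\<^sub>m ?d) ^\<^sub>m ?d = 0\<^sub>m ?d ?d"
    using unipotent_powers_of_int_roots[OF mat_of_cart_carrier A0 roots_mat \<open>infinite (n ` I)\<close>] by blast
  moreover have "unipotent (mat_pow (B i) L)" if "i \<in> J" for i
    using nilpotent that by (simp add: unipotent_iff_mat_of_cart mat_of_cart_pow)
  ultimately show ?thesis
    by blast
qed

lemma infinite_image_if_filterlim_at_top:
  fixes f :: "'a \<Rightarrow> nat"
  assumes "filterlim f at_top F" and "F \<noteq> bot" and "eventually P F"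
  shows "infinite (f ` {x. P x})"
proof
  assume "finite (f ` {x. P x})"
  then obtain K where K: "\<And>x. P x \<Longrightarrow> f x \<le> K"
    by (auto simp: finite_nat_set_iff_bounded_le)
  have "eventually (\<lambda>x. P x \<and> Suc K \<le> f x) F"
    using assms(1,3) by (auto simp: filterlim_at_top intro: eventually_conj)
  then obtain x where "P x" "Suc K \<le> f x"
    using eventually_happens' assms(2) by blast
  then show False
    using K by force
qed

theorem theorem4p1:
  fixes A :: "int^'m^'m"
    and B :: "nat \<Rightarrow> int^'m^'m"
    and r :: "nat \<Rightarrow> int"
  assumes "invertible A"
    and "filterlim r at_top sequentially"
    and "\<And>i. invertible (B i)"
    and "\<And>i. mat_zpow (B i) (r i) = A"
  shows "\<exists>e::int. e \<noteq> 0 \<and> mat_zpow A e = mat 1"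
proof -
  define n where "n i = nat (r i)" for i
  define I where "I = {i. 1 \<le> r i}"
  have roots: "0 < n i \<and> mat_pow (B i) (n i) = A" if "i \<in> I" for i
    using that assms(4)[of i] by (simp add: I_def n_def mat_zpow_def)
  have "filterlim n at_top sequentially"
    unfolding n_def by (rule filterlim_compose[OF filterlim_nat_sequentially assms(2)])
  moreover have "eventually (\<lambda>i. 1 \<le> r i) sequentially"
    using assms(2) by (simp add: filterlim_at_top)
  ultimately have "infinite (n ` I)"
    unfolding I_def by (intro infinite_image_if_filterlim_at_top) simp_all
  then obtain L J where "L > 0" and "J \<subseteq> I" and "infinite (n ` J)"
    and "\<forall>i\<in>J. unipotent (mat_pow (B i) L)"
    using unipotent_powers_of_roots[OF assms(1) roots \<open>infinite (n ` I)\<close>] by blast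
  then have "mat_pow A L = mat 1"
    using roots \<open>J \<subseteq> I\<close> by (intro power_eq_one_if_unipotent_roots[of n J B]) auto
  then show ?thesis
    using \<open>L > 0\<close> by (intro exI[of _ "int L"]) (simp add: mat_zpow_def)
qed

end
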